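(* Let $f$ satisfy Assumption A, $g$ satisfy Assumption B, and let $(u_k)_{k\ge0}$ be a sequence of proximal gradient iterates with parameter $L>0$ where $1/L>s_0$. Then for every $k\ge1$ and every $p\in[1,\infty)$, \[ \|u_{k+1}-u_k\|_{L^p(\Omega)}^p\ \ge\ \sigma(1/L)^p\,\|\chi_k-\chi_{k+1}\|_{L^1(\Omega)} , \] and $\sigma(1/L)>0$.
   Context: $\Omega\subset\mathbb{R}^n$ Lebesgue measurable with finite measure. Assumption A: $f:L^2(\Omega)\to\mathbb{R}$ bounded below, weakly lower semicontinuous, Fréchet differentiable, $\nabla f$ Lipschitz with constant $L_f$. Assumption B on $g:\mathbb{R}\to\mathbb{R}\cup\{+\infty\}$: (B1) lsc, symmetric, $g(0)=0$; (B2) $g(u)<\infty$ for some $u\ne0$; (B3) one of (B3a) $g$ twice differentiable on some $(0,\epsilon)$, $\limsup_{u\searrow0}g''(u)\in(-\infty,0)$; (B3b) same differentiability, $\lim_{u\searrow0}g''(u)=-\infty$; (B3c) $\liminf_{u\searrow0}g(u)>0$; (B4) $g\ge0$. $\operatorname{prox}_{sg}(q):=\operatorname{argmin}_{u\in\mathbb{R}}(\tfrac12|u-q|^2+sg(u))$. Constants: $s_0:=0$ if (B3b) or (B3c) holds, otherwise $s_0:=-1/\limsup_{u\searrow0}g''(u)$; for $s>0$, $\sigma(s):=\inf\{|u|:\ u\neq0,\ u\in\operatorname{prox}_{sg}(q)\text{ for some }q\in\mathbb{R}\}$. Proximal gradient iterates with parameter $L>0$: a sequence $(u_k)_{k\ge0}\subset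 L^2(\Omega)$ with arbitrary $u_0\in L^2(\Omega)$ such that for every $k\ge0$, $u_{k+1}$ is a global minimizer over $u\in L^2(\Omega)$ of $f(u_k)+\int_\Omega\nabla f(u_k)(u-u_k)\,dx+\frac L2\|u-u_k\|^2_{L^2(\Omega)}+\int_\Omega g(u(x))\,dx$. $I_k:=\{x\in\Omega: u_k(x)\ne0\}$ and $\chi_k$ is its characteristic function. *)

theory Defs
  imports "HOL-Analysis.Analysis"
begin

definition L2 :: "'a::euclidean_space set \<Rightarrow> ('a \<Rightarrow> real) set" where
  "L2 \<Omega> = {u. u \<in> borel_measurable (lebesgue_on \<Omega>) \<and>
                 integrable (lebesgue_on \<Omega>) (\<lambda>x. (u x)\<^sup>2)}"

definition L2norm :: "'a::euclidean_space set \<Rightarrow> ('a \<Rightarrow> real) \<Rightarrow> real" where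
  "L2norm \<Omega> u = sqrt (\<integral>x. (u x)\<^sup>2 \<partial>(lebesgue_on \<Omega>))"

definition L2inner :: "'a::euclidean_space set \<Rightarrow> ('a \<Rightarrow> real) \<Rightarrow> ('a \<Rightarrow> real) \<Rightarrow> real" where
  "L2inner \<Omega> u v = (\<integral>x. u x * v x \<partial>(lebesgue_on \<Omega>))"

text \<open>Assumption A, with Df the (Riesz representative of the) Frechet gradient of f.\<close>

definition assumptionA ::
  "'a::euclidean_space set \<Rightarrow> (('a \<Rightarrow> real) \<Rightarrow> real) \<Rightarrow> (('a \<Rightarrow> real) \<Rightarrow> ('a \<Rightarrow> real)) \<Rightarrow> real \<Rightarrow> bool" where
  "assumptionA \<Omega> f Df Lf \<longleftrightarrow>
     (\<exists>c. \<forall>u\<in>L2 \<Omega>. c \<le> f u) \<and>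
     (\<forall>w w0. (\<forall>k. w k \<in> L2 \<Omega>) \<and> w0 \<in> L2 \<Omega> \<and>
        (\<forall>\<phi>\<in>L2 \<Omega>. (\<lambda>k. L2inner \<Omega> (w k) \<phi>) \<longlonglongrightarrow> L2inner \<Omega> w0 \<phi>)
        \<longrightarrow> ereal (f w0) \<le> liminf (\<lambda>k. ereal (f (w k)))) \<and>
     (\<forall>u\<in>L2 \<Omega>. Df u \<in> L2 \<Omega> \<and>
        (\<forall>\<epsilon>>0. \<exists>\<delta>>0. \<forall>v\<in>L2 \<Omega>. L2norm \<Omega> (\<lambda>x. v x - u x) < \<delta> \<longrightarrow>
           \<bar>f v - f u - L2inner \<Omega> (Df u) (\<lambda>x. v x - u x)\<bar> \<le> \<epsilon> * L2norm \<Omega> (\<lambda>x. v x - u x))) \<and>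
     (\<forall>u\<in>L2 \<Omega>. \<forall>v\<in>L2 \<Omega>.
        L2norm \<Omega> (\<lambda>x. Df u x - Df v x) \<le> Lf * L2norm \<Omega> (\<lambda>x. u x - v x))"

definition greal :: "(real \<Rightarrow> ereal) \<Rightarrow> real \<Rightarrow> real" where
  "greal g t = real_of_ereal (g t)"

definition gsecond :: "(real \<Rightarrow> ereal) \<Rightarrow> real \<Rightarrow> real" where
  "gsecond g = deriv (deriv (greal g))"

definition twice_diff_near0 :: "(real \<Rightarrow> ereal) \<Rightarrow> bool" where
  "twice_diff_near0 g \<longleftrightarrow> (\<exists>\<epsilon>>0. \<forall>u\<in>{0<..<\<epsilon>}.
      \<bar>g u\<bar> \<noteq> \<infinity> \<and> greal g differentiable (at u) \<and> deriv (greal g) differentiable (at u))"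

definition B3a :: "(real \<Rightarrow> ereal) \<Rightarrow> bool" where
  "B3a g \<longleftrightarrow> twice_diff_near0 g \<and>
     Limsup (at_right 0) (\<lambda>u. ereal (gsecond g u)) \<in> {-\<infinity><..<0}"

definition B3b :: "(real \<Rightarrow> ereal) \<Rightarrow> bool" where
  "B3b g \<longleftrightarrow> twice_diff_near0 g \<and> filterlim (gsecond g) at_bot (at_right 0)"

definition B3c :: "(real \<Rightarrow> ereal) \<Rightarrow> bool" where
  "B3c g \<longleftrightarrow> Liminf (at_right 0) g > 0"

definition assumptionB :: "(real \<Rightarrow> ereal) \<Rightarrow> bool" where
  "assumptionB g \<longleftrightarrow>
     (\<forall>x X. X \<longlonglongrightarrow> x \<longrightarrow> g x \<le> liminf (\<lambda>k. g (X k))) \<and>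
     (\<forall>u. g (-u) = g u) \<and> g 0 = 0 \<and>
     (\<exists>u. u \<noteq> 0 \<and> g u < \<infinity>) \<and>
     (B3a g \<or> B3b g \<or> B3c g) \<and>
     (\<forall>u. g u \<ge> 0)"

definition s0 :: "(real \<Rightarrow> ereal) \<Rightarrow> real" where
  "s0 g = (if B3b g \<or> B3c g then 0
           else - 1 / real_of_ereal (Limsup (at_right 0) (\<lambda>u. ereal (gsecond g u))))"

definition prox :: "real \<Rightarrow> (real \<Rightarrow> ereal) \<Rightarrow> real \<Rightarrow> real set" where
  "prox s g q = {u. \<forall>v. ereal ((u - q)\<^sup>2 / 2) + ereal s * g u \<le> ereal ((v - q)\<^sup>2 / 2) + ereal s * g v}"

definition \<sigma> :: "(real \<Rightarrow> ereal) \<Rightarrow> real \<Rightarrow> real" where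
  "\<sigma> g s = Inf {\<bar>u\<bar> | u. u \<noteq> 0 \<and> (\<exists>q. u \<in> prox s g q)}"

definition pg_obj :: "'a::euclidean_space set \<Rightarrow> (('a \<Rightarrow> real) \<Rightarrow> real) \<Rightarrow> (('a \<Rightarrow> real) \<Rightarrow> ('a \<Rightarrow> real))
    \<Rightarrow> (real \<Rightarrow> ereal) \<Rightarrow> real \<Rightarrow> ('a \<Rightarrow> real) \<Rightarrow> ('a \<Rightarrow> real) \<Rightarrow> ereal" where
  "pg_obj \<Omega> f Df g L uk u =
     ereal (f uk + L2inner \<Omega> (Df uk) (\<lambda>x. u x - uk x) + L / 2 * (L2norm \<Omega> (\<lambda>x. u x - uk x))\<^sup>2)
     + enn2ereal (\<integral>\<^sup>+ x. e2ennreal (g (u x)) \<partial>(lebesgue_on \<Omega>))"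

definition prox_grad_iterates :: "'a::euclidean_space set \<Rightarrow> (('a \<Rightarrow> real) \<Rightarrow> real) \<Rightarrow> (('a \<Rightarrow> real) \<Rightarrow> ('a \<Rightarrow> real))
    \<Rightarrow> (real \<Rightarrow> ereal) \<Rightarrow> real \<Rightarrow> (nat \<Rightarrow> 'a \<Rightarrow> real) \<Rightarrow> bool" where
  "prox_grad_iterates \<Omega> f Df g L u \<longleftrightarrow>
     u 0 \<in> L2 \<Omega> \<and>
     (\<forall>k. u (Suc k) \<in> L2 \<Omega> \<and>
          (\<forall>v\<in>L2 \<Omega>. pg_obj \<Omega> f Df g L (u k) (u (Suc k)) \<le> pg_obj \<Omega> f Df g L (u k) v))"

definition chi :: "'a::euclidean_space set \<Rightarrow> ('a \<Rightarrow> real) \<Rightarrow> 'a \<Rightarrow> real" where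
  "chi \<Omega> v = indicator {x\<in>\<Omega>. v x \<noteq> 0}"

end

theory Submission
  imports Defs
begin

text \<open>Minimality of a proximal gradient step localises: comparing u_{k+1} with competitors that
  are constant on a measurable set shows that almost everywhere u_{k+1}(x) minimises the scalar prox
  objective at u_k(x) - \<nabla>f(u_k)(x) / L, and separability of the graph of g lets countably many such
  comparisons suffice. Wherever the support changes between u_k and u_{k+1}, one of the two values is
  therefore a nonzero prox point, so the jump is at least \<sigma>(1/L); integrating gives the L^p bound.
  Positivity of \<sigma>(1/L) is a gap at 0 in the prox values: under (B3c) a small nonzero point costs
  more than 0 and more than a fixed point w, and under (B3a)/(B3b) with 1/L > s0 the prox objective is
  strictly concave near 0. Nonzero prox points exist because g is finite at some w \<noteq> 0 and the prox
  objective, being lower semicontinuous and coercive, attains its minimum.\<close>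

definition prox_obj :: "real \<Rightarrow> (real \<Rightarrow> ereal) \<Rightarrow> real \<Rightarrow> real \<Rightarrow> ereal" where
  "prox_obj s g q u = ereal ((u - q)\<^sup>2 / 2) + ereal s * g u"

lemma prox_iff: "u \<in> prox s g q \<longleftrightarrow> (\<forall>v. prox_obj s g q u \<le> prox_obj s g q v)"
  unfolding prox_def prox_obj_def by simp

lemma ereal_greal: "(\<And>t. g t \<ge> 0) \<Longrightarrow> g t \<noteq> \<infinity> \<Longrightarrow> g t = ereal (greal g t)"
  unfolding greal_def by (cases "g t") auto

lemma greal_nonneg: "(\<And>t. g t \<ge> 0) \<Longrightarrow> greal g t \<ge> 0"
  unfolding greal_def by (simp add: real_of_ereal_pos)

lemma prox_obj_finite:
  "(\<And>t. g t \<ge> 0) \<Longrightarrow> g u \<noteq> \<infinity> \<Longrightarrow> prox_obj s g q u = ereal ((u - q)\<^sup>2 / 2 + s * greal g u)"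
  unfolding prox_obj_def by (subst ereal_greal[of g u]) auto

lemma prox_obj_infinite: "s > 0 \<Longrightarrow> g u = \<infinity> \<Longrightarrow> prox_obj s g q u = \<infinity>"
  unfolding prox_obj_def by simp

lemma prox_uminus:
  assumes "\<And>t. g (-t) = g t" and "u \<in> prox s g q"
  shows "-u \<in> prox s g (-q)"
proof -
  have "prox_obj s g (-q) v = prox_obj s g q (-v)" for v
    unfolding prox_obj_def using assms(1)[of v] by (simp add: power2_eq_square algebra_simps)
  then show ?thesis using assms(2) unfolding prox_iff by (metis minus_minus)
qed

lemma prox_finite:
  assumes "s > 0" and "g 0 = 0" and "u \<in> prox s g q"
  shows "g u \<noteq> \<infinity>"
proof
  assume "g u = \<infinity>"
  then have "prox_obj s g q u = \<infinity>" by (rule prox_obj_infinite[OF assms(1)])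
  moreover have "prox_obj s g q u \<le> prox_obj s g q 0" using assms(3) unfolding prox_iff by blast
  moreover have "prox_obj s g q 0 < \<infinity>" using assms(2) unfolding prox_obj_def by simp
  ultimately show False by simp
qed

lemma prox_le:
  assumes "\<And>t. g t \<ge> 0" and "u \<in> prox s g q" and "g u \<noteq> \<infinity>" and "g v \<noteq> \<infinity>"
  shows "(u - q)\<^sup>2 / 2 + s * greal g u \<le> (v - q)\<^sup>2 / 2 + s * greal g v"
  using assms(2) prox_obj_finite[where g=g, OF assms(1,3)] prox_obj_finite[where g=g, OF assms(1,4)]
  unfolding prox_iff by (metis ereal_less_eq(3))

text \<open>At a small positive prox point u, comparing with 0 forces q u > s c, so q is large;
  comparing with a fixed w > 0 of finite cost bounds q from above.\<close>

lemma prox_gap_of_liminf_pos: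
  assumes s: "s > 0" and g0: "g 0 = 0" and nn: "\<And>t. g t \<ge> 0"
    and w: "w > 0" "g w \<noteq> \<infinity>" and c: "c > 0" and \<delta>: "\<delta> > 0"
    and gc: "\<And>t. 0 < t \<Longrightarrow> t < \<delta> \<Longrightarrow> ereal c < g t"
  shows "\<exists>\<delta>'>0. \<forall>u q. 0 < u \<longrightarrow> u \<in> prox s g q \<longrightarrow> \<delta>' \<le> u"
proof -
  define G where "G = greal g w"
  have G: "G \<ge> 0" unfolding G_def using nn by (rule greal_nonneg)
  define Q where "Q = (w\<^sup>2 + 2 * s * G) / w"
  have Q: "Q > 0" unfolding Q_def using w G s by (intro divide_pos_pos add_pos_nonneg) auto
  define \<delta>' where "\<delta>' = min \<delta> (min (w / 2) (s * c / Q))"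
  have "\<delta>' \<le> u" if u: "0 < u" "u \<in> prox s g q" for u q
  proof (rule ccontr)
    assume "\<not> \<delta>' \<le> u"
    then have small: "u < \<delta>" "u < w / 2" "u < s * c / Q" unfolding \<delta>'_def by auto
    have gu: "g u \<noteq> \<infinity>" using prox_finite[OF s g0 u(2)] .
    have "ereal c < ereal (greal g u)" using gc[OF u(1) small(1)] ereal_greal[where g=g, OF nn gu] by simp
    then have sc: "s * c < s * greal g u" using s by simp
    have sq: "(x - q)\<^sup>2 / 2 = x\<^sup>2 / 2 - q * x + q\<^sup>2 / 2" for x
      by (simp add: power2_eq_square field_simps)
    have "greal g 0 = 0" using g0 unfolding greal_def by simp
    then have "(u - q)\<^sup>2 / 2 + s * greal g u \<le> q\<^sup>2 / 2"
      using prox_le[OF nn u(2) gu, of 0] g0 by simp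
    then have uq: "s * c < q * u" using sc sq[of u] zero_le_power2[of u] by linarith
    then have "0 < q * u" using mult_pos_pos[OF s c] by linarith
    then have q: "q > 0" using u(1) by (simp add: zero_less_mult_iff)
    have "(u - q)\<^sup>2 / 2 + s * greal g u \<le> (w - q)\<^sup>2 / 2 + s * G"
      using prox_le[OF nn u(2) gu w(2)] unfolding G_def .
    then have "q * (w - u) \<le> w\<^sup>2 / 2 + s * G"
      using sc mult_pos_pos[OF s c] sq[of u] sq[of w] zero_le_power2[of u] right_diff_distrib[of q w u]
      by linarith
    moreover have "q * (w / 2) < q * (w - u)" using q small by simp
    ultimately have "q < Q" unfolding Q_def using w by (simp add: field_simps)
    then have "q * u < Q * u" using u(1) by simp
    also have "\<dots> < s * c" using small(3) Q by (simp add: field_simps)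
    finally show False using uq by simp
  qed
  moreover have "\<delta>' > 0" unfolding \<delta>'_def using \<delta> w s c Q by auto
  ultimately show ?thesis by blast
qed

text \<open>On (0, \<delta>) the prox objective has second derivative 1 + s g'' < 0, so it is strictly concave
  there and a point of (0, \<delta>) cannot minimise it: by the mean value theorem its derivative
  would be \<le> 0 just left of u, \<ge> 0 just right of u, and yet strictly decreasing.\<close>

lemma prox_gap_of_concave:
  assumes s: "s > 0" and nn: "\<And>t. g t \<ge> 0"
    and concave: "\<And>t. 0 < t \<Longrightarrow> t < \<delta> \<Longrightarrow> g t \<noteq> \<infinity> \<and> greal g differentiable (at t) \<and>
              deriv (greal g) differentiable (at t) \<and> 1 + s * gsecond g t < 0"
    and u: "0 < u" "u \<in> prox s g q"
  shows "\<delta> \<le> u"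
proof (rule ccontr)
  assume "\<not> \<delta> \<le> u"
  define t where "t = min u (\<delta> - u) / 2"
  have t: "t > 0" "0 < u - t" "u + t < \<delta>" using u \<open>\<not> \<delta> \<le> u\<close> unfolding t_def by (auto simp: min_def field_simps)
  define h where "h x = (x - q)\<^sup>2 / 2 + s * greal g x" for x
  define h' where "h' x = (x - q) + s * deriv (greal g) x" for x
  have dh: "DERIV h x :> h' x" if "0 < x" "x < \<delta>" for x
  proof -
    have "DERIV (greal g) x :> deriv (greal g) x"
      using concave that DERIV_deriv_iff_real_differentiable by blast
    then show ?thesis unfolding h_def h'_def by (auto intro!: derivative_eq_intros)
  qed
  have dh': "DERIV h' x :> 1 + s * gsecond g x" if "0 < x" "x < \<delta>" for x
  proof -
    have "DERIV (deriv (greal g)) x :> gsecond g x"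
      using concave that DERIV_deriv_iff_real_differentiable unfolding gsecond_def by blast
    then show ?thesis unfolding h'_def by (auto intro!: derivative_eq_intros)
  qed
  obtain \<xi> where \<xi>: "u < \<xi>" "\<xi> < u + t" "h (u + t) - h u = (u + t - u) * h' \<xi>"
    using MVT2[of u "u + t" h h'] dh t u by force
  obtain \<eta> where \<eta>: "u - t < \<eta>" "\<eta> < u" "h u - h (u - t) = (u - (u - t)) * h' \<eta>"
    using MVT2[of "u - t" u h h'] dh t u by force
  obtain \<zeta> where \<zeta>: "\<eta> < \<zeta>" "\<zeta> < \<xi>" "h' \<xi> - h' \<eta> = (\<xi> - \<eta>) * (1 + s * gsecond g \<zeta>)"
    using MVT2[of \<eta> \<xi> h' "\<lambda>x. 1 + s * gsecond g x"] dh' \<xi> \<eta> t by force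
  have "(\<xi> - \<eta>) * (1 + s * gsecond g \<zeta>) < 0"
    using \<zeta> \<xi> \<eta> t concave[of \<zeta>] by (intro mult_pos_neg) auto
  then have "h' \<xi> < h' \<eta>" using \<zeta>(3) by simp
  moreover have gu: "g u \<noteq> \<infinity>" using concave u t by auto
  then have "h u \<le> h (u + t)" unfolding h_def using prox_le[OF nn u(2) gu] concave t by auto
  then have "0 \<le> t * h' \<xi>" using \<xi> by simp
  then have "h' \<xi> \<ge> 0" using t(1) by (simp add: zero_le_mult_iff)
  moreover have "h u \<le> h (u - t)" unfolding h_def using prox_le[OF nn u(2) gu] concave t by auto
  then have "t * h' \<eta> \<le> 0" using \<eta> by simp
  then have "h' \<eta> \<le> 0" using t(1) by (simp add: mult_le_0_iff)
  ultimately show False by simp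
qed

lemma eventually_prox_obj_concave:
  assumes B3: "B3a g \<or> B3b g" and not_B3c: "\<not> B3c g" and s: "s > 0" "s > s0 g"
  shows "eventually (\<lambda>t. 1 + s * gsecond g t < 0) (at_right 0)"
proof (cases "B3b g")
  case True
  then have "eventually (\<lambda>t. gsecond g t \<le> -1/s - 1) (at_right 0)"
    unfolding B3b_def filterlim_at_bot by blast
  then show ?thesis
  proof (rule eventually_mono)
    fix t assume "gsecond g t \<le> -1/s - 1"
    then have "s * gsecond g t \<le> s * (-1/s - 1)" using s by (simp add: mult_left_mono)
    also have "\<dots> = -1 - s" using s by (simp add: field_simps)
    finally show "1 + s * gsecond g t < 0" using s by simp
  qed
next
  case False
  define l where "l = Limsup (at_right 0) (\<lambda>t. ereal (gsecond g t))"
  have "l \<in> {-\<infinity><..<0}" using B3 False unfolding B3a_def l_def by simp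
  then obtain r where r: "l = ereal r" "r < 0" by (cases l) auto
  have "s0 g = - 1 / r" unfolding s0_def using not_B3c False r l_def by simp
  have "1 = (- 1 / r) * (- r)" using r by simp
  also have "\<dots> < s * (- r)" using s \<open>s0 g = - 1 / r\<close> r by (intro mult_strict_right_mono) auto
  finally have "1 < s * (- r)" .
  then have "r < -1/s" using s by (simp add: field_simps)
  then have "l < ereal (-1/s)" using r by simp
  then have "eventually (\<lambda>t. ereal (gsecond g t) < ereal (-1/s)) (at_right 0)"
    unfolding l_def by (rule Limsup_lessD)
  then show ?thesis
  proof (rule eventually_mono)
    fix t assume "ereal (gsecond g t) < ereal (-1/s)"
    then have "s * gsecond g t < s * (-1/s)" using s(1) by (intro mult_strict_left_mono) auto
    then show "1 + s * gsecond g t < 0" using s by simp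
  qed
qed

lemma assumptionB_pos_finite:
  assumes "assumptionB g"
  obtains w where "w > 0" "g w \<noteq> \<infinity>"
proof -
  obtain w where w: "w \<noteq> 0" "g w < \<infinity>" using assms unfolding assumptionB_def by blast
  have "g (- w) = g w" using assms unfolding assumptionB_def by blast
  then have "g \<bar>w\<bar> = g w" by (cases "w \<ge> 0") auto
  then show thesis using that[of "\<bar>w\<bar>"] w by auto
qed

lemma prox_gap_pos:
  assumes B: "assumptionB g" and s: "s > 0" "s > s0 g"
  shows "\<exists>\<delta>>0. \<forall>u q. 0 < u \<longrightarrow> u \<in> prox s g q \<longrightarrow> \<delta> \<le> u"
proof -
  have nn: "\<And>t. g t \<ge> 0" and g0: "g 0 = 0" and B3: "B3a g \<or> B3b g \<or> B3c g"
    using B unfolding assumptionB_def by blast+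
  show ?thesis
  proof (cases "B3c g")
    case True
    then obtain c where c: "0 < ereal c" "ereal c < Liminf (at_right 0) g"
      unfolding B3c_def using ereal_dense2 by blast
    have "eventually (\<lambda>t. ereal c < g t) (at_right 0)" using less_LiminfD[OF c(2)] .
    then obtain \<delta> where \<delta>: "\<delta> > 0" "\<And>t. 0 < t \<Longrightarrow> t < \<delta> \<Longrightarrow> ereal c < g t"
      unfolding eventually_at_right_field by auto
    obtain w where "w > 0" "g w \<noteq> \<infinity>" using B by (rule assumptionB_pos_finite)
    moreover have "c > 0" using c(1) by simp
    ultimately show ?thesis using prox_gap_of_liminf_pos[of s g, OF s(1) g0 nn] \<delta> by blast
  next
    case False
    then obtain \<epsilon> where \<epsilon>: "\<epsilon> > 0" and twice_diff: "\<forall>t\<in>{0<..<\<epsilon>}.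
      \<bar>g t\<bar> \<noteq> \<infinity> \<and> greal g differentiable (at t) \<and> deriv (greal g) differentiable (at t)"
      using B3 unfolding B3a_def B3b_def twice_diff_near0_def by blast
    have "B3a g \<or> B3b g" using B3 False by blast
    then have "eventually (\<lambda>t. 1 + s * gsecond g t < 0) (at_right 0)"
      using eventually_prox_obj_concave[OF _ False s] by blast
    then obtain b where b: "b > 0" "\<And>t. 0 < t \<Longrightarrow> t < b \<Longrightarrow> 1 + s * gsecond g t < 0"
      unfolding eventually_at_right_field by auto
    have "min b \<epsilon> \<le> u" if "0 < u" "u \<in> prox s g q" for u q
    proof (rule prox_gap_of_concave[OF s(1) nn _ that])
      fix t assume t: "0 < t" "t < min b \<epsilon>"
      then have "\<bar>g t\<bar> \<noteq> \<infinity>" "greal g differentiable (at t)" "deriv (greal g) differentiable (at t)"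
        using twice_diff by auto
      moreover have "1 + s * gsecond g t < 0" using b(2) t by simp
      ultimately show "g t \<noteq> \<infinity> \<and> greal g differentiable (at t) \<and>
          deriv (greal g) differentiable (at t) \<and> 1 + s * gsecond g t < 0"
        by (metis abs_ereal.simps(3))
    qed
    moreover have "min b \<epsilon> > 0" using b(1) \<epsilon> by simp
    ultimately show ?thesis by blast
  qed
qed

lemma prox_gap:
  assumes B: "assumptionB g" and s: "s > 0" "s > s0 g"
  obtains \<delta> where "\<delta> > 0" "\<And>u q. u \<noteq> 0 \<Longrightarrow> u \<in> prox s g q \<Longrightarrow> \<delta> \<le> \<bar>u\<bar>"
proof -
  obtain \<delta> where \<delta>: "\<delta> > 0" "\<forall>u q. 0 < u \<longrightarrow> u \<in> prox s g q \<longrightarrow> \<delta> \<le> u"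
    using prox_gap_pos[OF assms] by blast
  have sym: "\<And>t. g (-t) = g t" using B unfolding assumptionB_def by blast
  have "\<delta> \<le> \<bar>u\<bar>" if "u \<noteq> 0" "u \<in> prox s g q" for u q
  proof (cases "u > 0")
    case True
    then show ?thesis using \<delta>(2) that(2) by fastforce
  next
    case False
    then have "0 < - u" using that(1) by simp
    then have "\<delta> \<le> - u" using \<delta>(2) prox_uminus[OF sym that(2)] by blast
    then show ?thesis by simp
  qed
  with \<delta>(1) show thesis by (rule that)
qed

lemma prox_obj_lsc:
  assumes lsc: "\<And>x X. X \<longlonglongrightarrow> x \<Longrightarrow> g x \<le> liminf (\<lambda>k. g (X k))"
    and nn: "\<And>t. g t \<ge> 0" and s: "s > 0"
    and X: "X \<longlonglongrightarrow> l" "\<And>n. g (X n) \<noteq> \<infinity>"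
    and lim: "(\<lambda>n. (X n - q)\<^sup>2 / 2 + s * greal g (X n)) \<longlonglongrightarrow> m"
  shows "prox_obj s g q l \<le> ereal m"
proof -
  define G where "G = (m - (l - q)\<^sup>2 / 2) / s"
  have "(\<lambda>n. ((X n - q)\<^sup>2 / 2 + s * greal g (X n) - (X n - q)\<^sup>2 / 2) / s) \<longlonglongrightarrow> G"
    unfolding G_def using s by (intro tendsto_intros lim X(1)) auto
  then have "(\<lambda>n. greal g (X n)) \<longlonglongrightarrow> G" using s by simp
  then have "(\<lambda>n. g (X n)) \<longlonglongrightarrow> ereal G"
    using ereal_greal[where g=g, OF nn X(2)] by (simp add: lim_ereal)
  then have "g l \<le> ereal G" using lsc[OF X(1)] by (simp add: lim_imp_Liminf)
  then have "prox_obj s g q l \<le> ereal ((l - q)\<^sup>2 / 2) + ereal s * ereal G"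
    unfolding prox_obj_def using s by (intro add_left_mono ereal_mult_left_mono) auto
  also have "\<dots> = ereal m" unfolding G_def using s by simp
  finally show ?thesis .
qed

lemma prox_nonempty:
  assumes lsc: "\<And>x X. X \<longlonglongrightarrow> x \<Longrightarrow> g x \<le> liminf (\<lambda>k. g (X k))"
    and nn: "\<And>t. g t \<ge> 0" and g0: "g 0 = 0" and s: "s > 0"
  obtains l where "l \<in> prox s g q"
proof -
  define H where "H v = (v - q)\<^sup>2 / 2 + s * greal g v" for v
  define m where "m = (INF v. prox_obj s g q v)"
  have m_le: "m \<le> prox_obj s g q v" for v unfolding m_def by (rule INF_lower) simp
  have "m \<ge> 0" unfolding m_def prox_obj_def using nn s by (intro INF_greatest) simp
  moreover have "m < \<infinity>" using m_le[of 0] g0 unfolding prox_obj_def by (cases m) auto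
  ultimately obtain mr where mr: "m = ereal mr" by (cases m) auto
  have "\<exists>v. prox_obj s g q v < ereal (mr + inverse (Suc n))" for n
  proof -
    have "(INF v. prox_obj s g q v) < ereal (mr + inverse (Suc n))" using mr m_def by simp
    then show ?thesis unfolding INF_less_iff by blast
  qed
  then obtain X where X: "\<And>n. prox_obj s g q (X n) < ereal (mr + inverse (Suc n))" by metis
  have X_fin: "g (X n) \<noteq> \<infinity>" for n using X[of n] prox_obj_infinite[OF s] by force
  have H_X: "mr \<le> H (X n)" "H (X n) < mr + inverse (Suc n)" for n
    using m_le[of "X n"] X[of n] prox_obj_finite[where g=g, OF nn X_fin] mr unfolding H_def by auto
  have X_bound: "\<bar>X n - q\<bar> \<le> sqrt (2 * (mr + 1))" for n
  proof -
    have "inverse (Suc n) \<le> (1::real)" by (simp add: inverse_le_1_iff)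
    moreover have "s * greal g (X n) \<ge> 0" using s greal_nonneg[where g=g, OF nn] by simp
    ultimately
    have "(X n - q)\<^sup>2 / 2 \<le> mr + 1" using H_X(2)[of n] unfolding H_def by linarith
    then have "(X n - q)\<^sup>2 \<le> 2 * (mr + 1)" by simp
    then show ?thesis using real_sqrt_le_mono by fastforce
  qed
  have "bounded (range X)" unfolding bounded_iff
  proof (intro exI ballI)
    fix x assume "x \<in> range X"
    then obtain n where "x = X n" by auto
    then show "norm x \<le> \<bar>q\<bar> + sqrt (2 * (mr + 1))"
      using abs_triangle_ineq[of q "X n - q"] X_bound[of n] by simp
  qed
  then obtain l r where r: "strict_mono r" and lim: "(X \<circ> r) \<longlonglongrightarrow> l"
    using bounded_imp_convergent_subsequence by blast
  have "(\<lambda>n. H (X n)) \<longlonglongrightarrow> mr"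
  proof (rule tendsto_sandwich[of "\<lambda>n. mr" _ _ "\<lambda>n. mr + inverse (Suc n)"])
    show "(\<lambda>n. mr + inverse (Suc n)) \<longlonglongrightarrow> mr"
      using tendsto_add[OF tendsto_const LIMSEQ_inverse_real_of_nat, of mr] by simp
    show "eventually (\<lambda>n. H (X n) \<le> mr + inverse (Suc n)) sequentially"
      using H_X(2) by (simp add: less_imp_le)
  qed (use H_X(1) in auto)
  then have H_lim: "(\<lambda>n. H (X (r n))) \<longlonglongrightarrow> mr"
    using LIMSEQ_subseq_LIMSEQ[OF _ r] by (simp add: comp_def)
  have "prox_obj s g q l \<le> ereal mr"
  proof (rule prox_obj_lsc[where g=g and X="\<lambda>n. X (r n)"])
    show "(\<lambda>n. X (r n)) \<longlonglongrightarrow> l" using lim by (simp add: comp_def)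
    show "(\<lambda>n. (X (r n) - q)\<^sup>2 / 2 + s * greal g (X (r n))) \<longlonglongrightarrow> mr"
      using H_lim by (simp add: H_def)
  qed (fact lsc nn s X_fin)+
  then show thesis using that m_le mr unfolding prox_iff by (metis order_trans)
qed

lemma prox_exists_nonzero:
  assumes B: "assumptionB g" and s: "s > 0"
  obtains u q where "u \<noteq> 0" "u \<in> prox s g q"
proof -
  have lsc: "\<And>x X. X \<longlonglongrightarrow> x \<Longrightarrow> g x \<le> liminf (\<lambda>k. g (X k))"
    and nn: "\<And>t. g t \<ge> 0" and g0: "g 0 = 0"
    using B unfolding assumptionB_def by blast+
  obtain w where w: "w > 0" "g w \<noteq> \<infinity>" using B by (rule assumptionB_pos_finite)
  define q where "q = (w\<^sup>2 / 2 + s * greal g w) / w + 1"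
  have "q * w = w\<^sup>2 / 2 + s * greal g w + w" unfolding q_def using w by (simp add: field_simps)
  then have "(w - q)\<^sup>2 / 2 + s * greal g w < q\<^sup>2 / 2" using w by (simp add: power2_eq_square field_simps)
  then have less: "prox_obj s g q w < prox_obj s g q 0"
    using prox_obj_finite[where g=g, OF nn w(2)] g0 unfolding prox_obj_def by simp
  obtain u where u: "u \<in> prox s g q" using prox_nonempty[where g=g, OF lsc nn g0 s] .
  moreover have "u \<noteq> 0" using u less unfolding prox_iff by (metis not_le)
  ultimately show thesis using that by blast
qed

lemma \<sigma>_le_abs: "u \<noteq> 0 \<Longrightarrow> u \<in> prox s g q \<Longrightarrow> \<sigma> g s \<le> \<bar>u\<bar>"
  unfolding \<sigma>_def by (rule cInf_lower) (auto intro: bdd_belowI[of _ 0])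

lemma \<sigma>_le_jump:
  assumes "u \<in> prox s g q" "v \<in> prox s g q'" "(u = 0) \<noteq> (v = 0)"
  shows "\<sigma> g s \<le> \<bar>v - u\<bar>"
  using assms \<sigma>_le_abs[of u s g q] \<sigma>_le_abs[of v s g q'] by (cases "u = 0") auto

lemma \<sigma>_pos:
  assumes "assumptionB g" and "s > 0" and "s > s0 g"
  shows "\<sigma> g s > 0"
proof -
  obtain \<delta> where \<delta>: "\<delta> > 0" "\<And>u q. u \<noteq> 0 \<Longrightarrow> u \<in> prox s g q \<Longrightarrow> \<delta> \<le> \<bar>u\<bar>"
    using prox_gap[OF assms] by blast
  obtain u q where "u \<noteq> 0" "u \<in> prox s g q" using prox_exists_nonzero[OF assms(1,2)] .
  then have "\<delta> \<le> \<sigma> g s" unfolding \<sigma>_def by (intro cInf_greatest) (use \<delta>(2) in auto)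
  with \<delta>(1) show ?thesis by simp
qed

lemma lsc_borel_measurable:
  fixes g :: "'a::first_countable_topology \<Rightarrow> ereal"
  assumes lsc: "\<And>x X. X \<longlonglongrightarrow> x \<Longrightarrow> g x \<le> liminf (\<lambda>k. g (X k))"
  shows "g \<in> borel_measurable borel"
proof (rule borel_measurableI_le)
  fix y
  have "closed {x. g x \<le> y}" unfolding closed_sequential_limits
  proof (intro allI impI)
    fix X l assume X: "(\<forall>n. X n \<in> {x. g x \<le> y}) \<and> X \<longlonglongrightarrow> l"
    then have "g l \<le> liminf (\<lambda>k. g (X k))" using lsc by blast
    also have "\<dots> \<le> limsup (\<lambda>k. g (X k))" by (rule Liminf_le_Limsup) simp
    also have "\<dots> \<le> y" by (rule Limsup_bounded) (use X in simp)
    finally show "l \<in> {x. g x \<le> y}" by simp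
  qed
  then show "{x \<in> space borel. g x \<le> y} \<in> sets borel" by simp
qed

lemma L2_measurable: "u \<in> L2 \<Omega> \<Longrightarrow> u \<in> borel_measurable (lebesgue_on \<Omega>)"
  unfolding L2_def by simp

lemma L2_integrable_square: "u \<in> L2 \<Omega> \<Longrightarrow> integrable (lebesgue_on \<Omega>) (\<lambda>x. (u x)\<^sup>2)"
  unfolding L2_def by simp

lemma L2_integrable_mult:
  assumes "u \<in> L2 \<Omega>" "v \<in> L2 \<Omega>"
  shows "integrable (lebesgue_on \<Omega>) (\<lambda>x. u x * v x)"
proof (rule Bochner_Integration.integrable_bound)
  show "integrable (lebesgue_on \<Omega>) (\<lambda>x. (u x)\<^sup>2 + (v x)\<^sup>2)"
    using L2_integrable_square[OF assms(1)] L2_integrable_square[OF assms(2)] by simp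
  show "(\<lambda>x. u x * v x) \<in> borel_measurable (lebesgue_on \<Omega>)"
    using L2_measurable[OF assms(1)] L2_measurable[OF assms(2)] by simp
  have "norm (u x * v x) \<le> norm ((u x)\<^sup>2 + (v x)\<^sup>2)" for x
  proof -
    have "2 * (\<bar>u x\<bar> * \<bar>v x\<bar>) \<le> (u x)\<^sup>2 + (v x)\<^sup>2"
      using sum_squares_bound[of "\<bar>u x\<bar>" "\<bar>v x\<bar>"] by (simp add: power2_eq_square)
    moreover have "0 \<le> \<bar>u x\<bar> * \<bar>v x\<bar>" by simp
    ultimately have "\<bar>u x * v x\<bar> \<le> (u x)\<^sup>2 + (v x)\<^sup>2" unfolding abs_mult by linarith
    then show ?thesis by simp
  qed
  then show "AE x in lebesgue_on \<Omega>. norm (u x * v x) \<le> norm ((u x)\<^sup>2 + (v x)\<^sup>2)" by simp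
qed

lemma L2_diff:
  assumes "u \<in> L2 \<Omega>" "v \<in> L2 \<Omega>"
  shows "(\<lambda>x. u x - v x) \<in> L2 \<Omega>"
proof -
  have "(\<lambda>x. (u x - v x)\<^sup>2) = (\<lambda>x. (u x)\<^sup>2 - 2 * (u x * v x) + (v x)\<^sup>2)"
    by (simp add: power2_eq_square algebra_simps)
  then show ?thesis
    using L2_integrable_square[OF assms(1)] L2_integrable_square[OF assms(2)]
      L2_integrable_mult[OF assms] L2_measurable[OF assms(1)] L2_measurable[OF assms(2)]
    unfolding L2_def by simp
qed

lemma L2_if_const:
  assumes "finite_measure (lebesgue_on \<Omega>)" and "P \<in> sets (lebesgue_on \<Omega>)" and "u \<in> L2 \<Omega>"
  shows "(\<lambda>x. if x \<in> P then c else u x) \<in> L2 \<Omega>"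
proof -
  interpret finite_measure "lebesgue_on \<Omega>" by fact
  have meas: "(\<lambda>x. if x \<in> P then c else u x) \<in> borel_measurable (lebesgue_on \<Omega>)"
    using assms(2) L2_measurable[OF assms(3)] by (intro measurable_If_set) auto
  have "integrable (lebesgue_on \<Omega>) (\<lambda>x. (if x \<in> P then c else u x)\<^sup>2)"
  proof (rule Bochner_Integration.integrable_bound)
    show "integrable (lebesgue_on \<Omega>) (\<lambda>x. c\<^sup>2 + (u x)\<^sup>2)" using L2_integrable_square[OF assms(3)] by simp
  qed (use meas in auto)
  then show ?thesis using meas unfolding L2_def by simp
qed

lemma L2norm_square: "(L2norm \<Omega> u)\<^sup>2 = (\<integral>x. (u x)\<^sup>2 \<partial>lebesgue_on \<Omega>)"
  unfolding L2norm_def by (simp add: integral_nonneg_AE)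

lemma pg_obj_eq_integral:
  assumes nn: "\<And>t. g t \<ge> 0" and a: "a \<in> L2 \<Omega>" and d: "Df a \<in> L2 \<Omega>" and u: "u \<in> L2 \<Omega>"
    and fin: "AE x in lebesgue_on \<Omega>. g (u x) \<noteq> \<infinity>"
    and int: "integrable (lebesgue_on \<Omega>) (\<lambda>x. greal g (u x))"
  shows "pg_obj \<Omega> f Df g L a u = ereal (f a +
           (\<integral>x. Df a x * (u x - a x) + L / 2 * (u x - a x)\<^sup>2 + greal g (u x) \<partial>lebesgue_on \<Omega>))"
proof -
  have ua: "(\<lambda>x. u x - a x) \<in> L2 \<Omega>" using u a by (rule L2_diff)
  have "(\<integral>\<^sup>+ x. e2ennreal (g (u x)) \<partial>lebesgue_on \<Omega>) = (\<integral>\<^sup>+ x. ennreal (greal g (u x)) \<partial>lebesgue_on \<Omega>)"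
    using fin by (intro nn_integral_cong_AE) (auto simp: ereal_greal[where g=g, OF nn])
  also have "\<dots> = ennreal (\<integral>x. greal g (u x) \<partial>lebesgue_on \<Omega>)"
    using int by (rule nn_integral_eq_integral) (simp add: greal_nonneg[where g=g, OF nn])
  finally have cost: "(\<integral>\<^sup>+ x. e2ennreal (g (u x)) \<partial>lebesgue_on \<Omega>) = ennreal (\<integral>x. greal g (u x) \<partial>lebesgue_on \<Omega>)" .
  have "(\<integral>x. greal g (u x) \<partial>lebesgue_on \<Omega>) \<ge> 0"
    by (rule integral_nonneg_AE) (simp add: greal_nonneg[where g=g, OF nn])
  then show ?thesis
    using L2_integrable_mult[OF d ua] L2_integrable_square[OF ua] int
    unfolding pg_obj_def L2inner_def L2norm_square cost by simp
qed

lemma pg_obj_minimizer_cost_finite: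
  assumes g_meas: "g \<in> borel_measurable borel" and nn: "\<And>t. g t \<ge> 0" and g0: "g 0 = 0"
    and b: "b \<in> L2 \<Omega>" and min: "pg_obj \<Omega> f Df g L a b \<le> pg_obj \<Omega> f Df g L a (\<lambda>x. 0)"
  shows "AE x in lebesgue_on \<Omega>. g (b x) \<noteq> \<infinity>"
    and "integrable (lebesgue_on \<Omega>) (\<lambda>x. greal g (b x))"
proof -
  note [measurable] = g_meas L2_measurable[OF b]
  have "pg_obj \<Omega> f Df g L a (\<lambda>x. 0) < \<infinity>" unfolding pg_obj_def using g0 by (simp add: e2ennreal_neg)
  then have "pg_obj \<Omega> f Df g L a b < \<infinity>" using min by (rule le_less_trans[rotated])
  then have cost: "(\<integral>\<^sup>+ x. e2ennreal (g (b x)) \<partial>lebesgue_on \<Omega>) \<noteq> \<infinity>"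
    unfolding pg_obj_def by auto
  have "AE x in lebesgue_on \<Omega>. e2ennreal (g (b x)) \<noteq> \<infinity>"
    by (rule nn_integral_PInf_AE[OF _ cost]) measurable
  then show fin: "AE x in lebesgue_on \<Omega>. g (b x) \<noteq> \<infinity>" by eventually_elim auto
  show "integrable (lebesgue_on \<Omega>) (\<lambda>x. greal g (b x))"
  proof (rule integrableI_nonneg)
    show "(\<lambda>x. greal g (b x)) \<in> borel_measurable (lebesgue_on \<Omega>)" unfolding greal_def by measurable
    show "AE x in lebesgue_on \<Omega>. 0 \<le> greal g (b x)" by (simp add: greal_nonneg[where g=g, OF nn])
    have "(\<integral>\<^sup>+ x. ennreal (greal g (b x)) \<partial>lebesgue_on \<Omega>) = (\<integral>\<^sup>+ x. e2ennreal (g (b x)) \<partial>lebesgue_on \<Omega>)"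
      using fin by (intro nn_integral_cong_AE) (auto simp: ereal_greal[where g=g, OF nn])
    then show "(\<integral>\<^sup>+ x. ennreal (greal g (b x)) \<partial>lebesgue_on \<Omega>) < \<infinity>"
      using cost by (simp add: top.not_eq_extremum)
  qed
qed

text \<open>Completing the square: the pointwise integrand of the proximal gradient objective is L times
  the prox objective at q = a - d / L, up to a term independent of t.\<close>

lemma pg_integrand_less:
  assumes L: "L > 0" and nn: "\<And>t. g t \<ge> 0" and fin: "g t \<noteq> \<infinity>" "g t' \<noteq> \<infinity>"
    and less: "prox_obj (1 / L) g (a - d / L) t < prox_obj (1 / L) g (a - d / L) t'"
  shows "d * (t - a) + L / 2 * (t - a)\<^sup>2 + greal g t < d * (t' - a) + L / 2 * (t' - a)\<^sup>2 + greal g t'"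
proof -
  have square: "d * (v - a) + L / 2 * (v - a)\<^sup>2 + greal g v
      = L * ((v - (a - d / L))\<^sup>2 / 2 + 1 / L * greal g v) - d\<^sup>2 / (2 * L)" for v
    using L by (simp add: power2_eq_square field_simps)
  have "(t - (a - d / L))\<^sup>2 / 2 + 1 / L * greal g t < (t' - (a - d / L))\<^sup>2 / 2 + 1 / L * greal g t'"
    using less prox_obj_finite[where g=g, OF nn fin(1)] prox_obj_finite[where g=g, OF nn fin(2)] by simp
  then show ?thesis unfolding square using L by simp
qed

lemma integrable_greal_if_const:
  assumes "finite_measure M" and "P \<in> sets M"
    and nn: "\<And>t. g t \<ge> 0" and b_int: "integrable M (\<lambda>x. greal g (b x))"
  shows "integrable M (\<lambda>x. greal g (if x \<in> P then w else b x))"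
proof (rule Bochner_Integration.integrable_bound)
  interpret finite_measure M by fact
  show "integrable M (\<lambda>x. greal g w + greal g (b x))" using b_int by simp
  have "(\<lambda>x. greal g (b x)) \<in> borel_measurable M" using b_int by (rule borel_measurable_integrable)
  then show "(\<lambda>x. greal g (if x \<in> P then w else b x)) \<in> borel_measurable M"
    unfolding if_distrib[of "greal g"] using assms(2) by (intro measurable_If_set) auto
  show "AE x in M. norm (greal g (if x \<in> P then w else b x)) \<le> norm (greal g w + greal g (b x))"
    by (simp add: greal_nonneg[where g=g, OF nn])
qed

lemma pg_integrand_integrable:
  assumes "a \<in> L2 \<Omega>" "d \<in> L2 \<Omega>" "u \<in> L2 \<Omega>" "integrable (lebesgue_on \<Omega>) (\<lambda>x. greal g (u x))"
  shows "integrable (lebesgue_on \<Omega>) (\<lambda>x. d x * (u x - a x) + L / 2 * (u x - a x)\<^sup>2 + greal g (u x))"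
  using L2_integrable_mult[OF assms(2) L2_diff[OF assms(3,1)]] L2_integrable_square[OF L2_diff[OF assms(3,1)]]
    assms(4) by simp

text \<open>Replacing b by the constant w on the set where w is strictly better for the prox objective
  is an admissible competitor that lowers the integrand there; minimality of b forces that set to be null.\<close>

lemma pg_minimizer_no_better_value:
  assumes fin_meas: "finite_measure (lebesgue_on \<Omega>)" and g_meas: "g \<in> borel_measurable borel"
    and nn: "\<And>t. g t \<ge> 0" and L: "L > 0"
    and a: "a \<in> L2 \<Omega>" and d: "Df a \<in> L2 \<Omega>" and b: "b \<in> L2 \<Omega>"
    and min: "\<forall>v\<in>L2 \<Omega>. pg_obj \<Omega> f Df g L a b \<le> pg_obj \<Omega> f Df g L a v"
    and b_fin: "AE x in lebesgue_on \<Omega>. g (b x) \<noteq> \<infinity>"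
    and b_int: "integrable (lebesgue_on \<Omega>) (\<lambda>x. greal g (b x))"
    and w: "g w \<noteq> \<infinity>"
  shows "AE x in lebesgue_on \<Omega>.
           prox_obj (1 / L) g (a x - Df a x / L) (b x) \<le> prox_obj (1 / L) g (a x - Df a x / L) w"
proof -
  interpret finite_measure "lebesgue_on \<Omega>" by fact
  note [measurable] = g_meas L2_measurable[OF a] L2_measurable[OF d] L2_measurable[OF b]
  define F where "F t x = Df a x * (t - a x) + L / 2 * (t - a x)\<^sup>2 + greal g t" for t x
  define P where "P = {x \<in> \<Omega>. prox_obj (1 / L) g (a x - Df a x / L) w < prox_obj (1 / L) g (a x - Df a x / L) (b x)}"
  have "{x \<in> space (lebesgue_on \<Omega>). prox_obj (1 / L) g (a x - Df a x / L) w
          < prox_obj (1 / L) g (a x - Df a x / L) (b x)} \<in> sets (lebesgue_on \<Omega>)"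
    unfolding prox_obj_def by measurable
  then have P_meas: "P \<in> sets (lebesgue_on \<Omega>)" unfolding P_def by simp
  define v where "v x = (if x \<in> P then w else b x)" for x
  have v: "v \<in> L2 \<Omega>" unfolding v_def using fin_meas P_meas b by (rule L2_if_const)
  have v_fin: "AE x in lebesgue_on \<Omega>. g (v x) \<noteq> \<infinity>" using b_fin by eventually_elim (simp add: v_def w)
  have v_int: "integrable (lebesgue_on \<Omega>) (\<lambda>x. greal g (v x))"
    unfolding v_def using fin_meas P_meas nn b_int by (rule integrable_greal_if_const)
  have F_int: "integrable (lebesgue_on \<Omega>) (\<lambda>x. F (u x) x)"
    if "u \<in> L2 \<Omega>" "integrable (lebesgue_on \<Omega>) (\<lambda>x. greal g (u x))" for u
    unfolding F_def using a d that by (rule pg_integrand_integrable)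
  have "pg_obj \<Omega> f Df g L a b \<le> pg_obj \<Omega> f Df g L a v" using min v by blast
  then have "(\<integral>x. F (b x) x \<partial>lebesgue_on \<Omega>) \<le> (\<integral>x. F (v x) x \<partial>lebesgue_on \<Omega>)"
    unfolding F_def
      pg_obj_eq_integral[where Df=Df and a=a and u=b and f=f and L=L, OF nn a d b b_fin b_int]
      pg_obj_eq_integral[where Df=Df and a=a and u=v and f=f and L=L, OF nn a d v v_fin v_int]
    by simp
  moreover have v_le: "AE x in lebesgue_on \<Omega>. F (v x) x \<le> F (b x) x"
    using b_fin by eventually_elim
      (use pg_integrand_less[where g=g and t=w, OF L nn w] in \<open>force simp: v_def P_def F_def\<close>)
  then have "(\<integral>x. F (v x) x \<partial>lebesgue_on \<Omega>) \<le> (\<integral>x. F (b x) x \<partial>lebesgue_on \<Omega>)"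
    using F_int[OF v v_int] F_int[OF b b_int] by (intro integral_mono_AE)
  ultimately have "AE x in lebesgue_on \<Omega>. F (v x) x = F (b x) x"
    using F_int[OF v v_int] F_int[OF b b_int] v_le by (intro integral_eq_mono_AE_eq_AE) auto
  then show ?thesis
    using b_fin AE_space
  proof eventually_elim
    case (elim x)
    show ?case
    proof (rule ccontr)
      assume "\<not> ?case"
      then have "x \<in> P" "F w x < F (b x) x"
        using elim pg_integrand_less[where g=g and t=w, OF L nn w] unfolding P_def F_def by auto
      then show False using elim(1) unfolding v_def by simp
    qed
  qed
qed

text \<open>Countably many competitors suffice: the graph of g on its finiteness domain is separable,
  and the prox objective depends continuously on the point (t, g t) of the graph.\<close>

lemma AE_prox_of_AE_le:
  assumes nn: "\<And>t. g t \<ge> 0" and s: "s > 0"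
    and fin: "AE x in M. g (b x) \<noteq> \<infinity>"
    and le: "\<And>w. g w \<noteq> \<infinity> \<Longrightarrow> AE x in M. prox_obj s g (q x) (b x) \<le> prox_obj s g (q x) w"
  shows "AE x in M. b x \<in> prox s g (q x)"
proof -
  define S where "S = {(t, greal g t) | t. g t \<noteq> \<infinity>}"
  obtain T where T: "countable T" "T \<subseteq> S" "S \<subseteq> closure T" using separable by blast
  have "AE x in M. \<forall>p\<in>T. prox_obj s g (q x) (b x) \<le> prox_obj s g (q x) (fst p)"
    using T(1,2) le unfolding S_def by (subst AE_ball_countable) auto
  then show ?thesis
  proof eventually_elim
    case (elim x)
    have "prox_obj s g (q x) (b x) \<le> prox_obj s g (q x) t" for t
    proof (cases "g t = \<infinity>")
      case True
      then show ?thesis using prox_obj_infinite[OF s] by simp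
    next
      case False
      then have "(t, greal g t) \<in> closure T" using T(3) unfolding S_def by auto
      then obtain Y where Y: "\<And>n. Y n \<in> T" "Y \<longlonglongrightarrow> (t, greal g t)"
        unfolding closure_sequential by blast
      have Y_graph: "g (fst (Y n)) \<noteq> \<infinity>" "snd (Y n) = greal g (fst (Y n))" for n
      proof -
        have "Y n \<in> S" using Y(1) T(2) by blast
        then show "g (fst (Y n)) \<noteq> \<infinity>" "snd (Y n) = greal g (fst (Y n))" unfolding S_def by auto
      qed
      have lim: "(\<lambda>n. ereal ((fst (Y n) - q x)\<^sup>2 / 2 + s * snd (Y n)))
          \<longlonglongrightarrow> ereal ((t - q x)\<^sup>2 / 2 + s * greal g t)"
        using tendsto_fst[OF Y(2)] tendsto_snd[OF Y(2)] by (auto intro!: tendsto_intros)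
      have le_Y: "prox_obj s g (q x) (b x) \<le> ereal ((fst (Y n) - q x)\<^sup>2 / 2 + s * snd (Y n))" for n
        using elim Y(1)[of n] prox_obj_finite[where g=g, OF nn Y_graph(1)] Y_graph(2) by auto
      show ?thesis
        unfolding prox_obj_finite[where g=g, OF nn False] by (rule LIMSEQ_le_const[OF lim]) (use le_Y in blast)
    qed
    then show ?case unfolding prox_iff by blast
  qed
qed

lemma pg_step_AE_prox:
  assumes \<Omega>: "\<Omega> \<in> sets lebesgue" "emeasure lebesgue \<Omega> < \<infinity>"
    and B: "assumptionB g" and L: "L > 0"
    and a: "a \<in> L2 \<Omega>" and d: "Df a \<in> L2 \<Omega>" and b: "b \<in> L2 \<Omega>"
    and min: "\<forall>v\<in>L2 \<Omega>. pg_obj \<Omega> f Df g L a b \<le> pg_obj \<Omega> f Df g L a v"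
  shows "AE x in lebesgue_on \<Omega>. b x \<in> prox (1 / L) g (a x - Df a x / L)"
proof -
  have nn: "\<And>t. g t \<ge> 0" and g0: "g 0 = 0"
    and lsc: "\<And>x X. X \<longlonglongrightarrow> x \<Longrightarrow> g x \<le> liminf (\<lambda>k. g (X k))"
    using B unfolding assumptionB_def by blast+
  have g_meas: "g \<in> borel_measurable borel" using lsc by (rule lsc_borel_measurable)
  have "\<Omega> \<in> lmeasurable" using \<Omega> by (simp add: fmeasurable_def)
  then have fin_meas: "finite_measure (lebesgue_on \<Omega>)" by (rule finite_measure_lebesgue_on)
  have "(\<lambda>x. 0) \<in> L2 \<Omega>" unfolding L2_def by simp
  then have "pg_obj \<Omega> f Df g L a b \<le> pg_obj \<Omega> f Df g L a (\<lambda>x. 0)" using min by blast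
  note b_cost = pg_obj_minimizer_cost_finite[OF g_meas nn g0 b this]
  show ?thesis
    using nn L b_cost(1) pg_minimizer_no_better_value[OF fin_meas g_meas nn L a d b min b_cost]
    by (intro AE_prox_of_AE_le) auto
qed

lemma chi_eq: "x \<in> \<Omega> \<Longrightarrow> chi \<Omega> v x = (if v x = 0 then 0 else 1)"
  unfolding chi_def by simp

lemma chi_measurable:
  assumes "v \<in> borel_measurable (lebesgue_on \<Omega>)"
  shows "chi \<Omega> v \<in> borel_measurable (lebesgue_on \<Omega>)"
proof -
  have "(\<lambda>x. if v x = 0 then 0 else 1 :: real) \<in> borel_measurable (lebesgue_on \<Omega>)"
    using assms by measurable
  then show ?thesis by (rule measurable_cong[THEN iffD1, rotated]) (simp add: chi_eq)
qed

lemma nn_integral_chi_diff_le: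
  assumes c: "c \<ge> 0" and p: "p \<ge> 0"
    and v: "v \<in> borel_measurable (lebesgue_on \<Omega>)" and w: "w \<in> borel_measurable (lebesgue_on \<Omega>)"
    and jump: "AE x in lebesgue_on \<Omega>. (v x = 0) \<noteq> (w x = 0) \<longrightarrow> c \<le> \<bar>w x - v x\<bar>"
  shows "ennreal (c powr p) * (\<integral>\<^sup>+ x. ennreal \<bar>chi \<Omega> v x - chi \<Omega> w x\<bar> \<partial>lebesgue_on \<Omega>)
           \<le> (\<integral>\<^sup>+ x. ennreal (\<bar>w x - v x\<bar> powr p) \<partial>lebesgue_on \<Omega>)"
proof -
  note [measurable] = chi_measurable[OF v] chi_measurable[OF w]
  have "ennreal (c powr p) * (\<integral>\<^sup>+ x. ennreal \<bar>chi \<Omega> v x - chi \<Omega> w x\<bar> \<partial>lebesgue_on \<Omega>)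
      = (\<integral>\<^sup>+ x. ennreal (c powr p) * ennreal \<bar>chi \<Omega> v x - chi \<Omega> w x\<bar> \<partial>lebesgue_on \<Omega>)"
    by (rule nn_integral_cmult[symmetric]) measurable
  also have "\<dots> \<le> (\<integral>\<^sup>+ x. ennreal (\<bar>w x - v x\<bar> powr p) \<partial>lebesgue_on \<Omega>)"
  proof (rule nn_integral_mono_AE)
    show "AE x in lebesgue_on \<Omega>. ennreal (c powr p) * ennreal \<bar>chi \<Omega> v x - chi \<Omega> w x\<bar>
        \<le> ennreal (\<bar>w x - v x\<bar> powr p)"
      using jump AE_space
    proof eventually_elim
      case (elim x)
      then have x: "x \<in> \<Omega>" by simp
      show ?case
      proof (cases "(v x = 0) = (w x = 0)")
        case True
        then show ?thesis by (simp add: chi_eq[OF x])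
      next
        case False
        then have "\<bar>chi \<Omega> v x - chi \<Omega> w x\<bar> = 1" by (auto simp: chi_eq[OF x])
        moreover have "c powr p \<le> \<bar>w x - v x\<bar> powr p"
          using elim(1) False c p by (intro powr_mono2) auto
        ultimately show ?thesis by (simp add: ennreal_leI)
      qed
    qed
  qed
  finally show ?thesis .
qed

theorem lemma4p2:
  fixes \<Omega> :: "'a::euclidean_space set"
    and f :: "('a \<Rightarrow> real) \<Rightarrow> real" and Df :: "('a \<Rightarrow> real) \<Rightarrow> ('a \<Rightarrow> real)" and Lf :: real
    and g :: "real \<Rightarrow> ereal" and L :: real and u :: "nat \<Rightarrow> 'a \<Rightarrow> real"
  assumes "\<Omega> \<in> sets lebesgue" and "emeasure lebesgue \<Omega> < \<infinity>"
    and "assumptionA \<Omega> f Df Lf"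
    and "assumptionB g"
    and "L > 0" and "1 / L > s0 g"
    and "prox_grad_iterates \<Omega> f Df g L u"
  shows "(\<forall>k\<ge>1. \<forall>p::real. p \<ge> 1 \<longrightarrow>
            (\<integral>\<^sup>+ x. ennreal (\<bar>u (Suc k) x - u k x\<bar> powr p) \<partial>(lebesgue_on \<Omega>))
            \<ge> ennreal (\<sigma> g (1 / L) powr p) *
               (\<integral>\<^sup>+ x. ennreal \<bar>chi \<Omega> (u k) x - chi \<Omega> (u (Suc k)) x\<bar> \<partial>(lebesgue_on \<Omega>)))
         \<and> \<sigma> g (1 / L) > 0"
proof -
  have \<sigma>: "\<sigma> g (1 / L) > 0" using \<sigma>_pos assms(4-6) by simp
  have u: "u k \<in> L2 \<Omega>" for k using assms(7) unfolding prox_grad_iterates_def by (cases k) auto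
  have Df: "Df (u k) \<in> L2 \<Omega>" for k using assms(3) u unfolding assumptionA_def by blast
  have step: "AE x in lebesgue_on \<Omega>. u (Suc k) x \<in> prox (1 / L) g (u k x - Df (u k) x / L)" for k
    using assms(7) unfolding prox_grad_iterates_def
    by (intro pg_step_AE_prox[where Df=Df and a="u k" and f=f, OF assms(1,2,4,5) u Df u]) simp
  have "(\<integral>\<^sup>+ x. ennreal (\<bar>u (Suc k) x - u k x\<bar> powr p) \<partial>lebesgue_on \<Omega>)
      \<ge> ennreal (\<sigma> g (1 / L) powr p) *
           (\<integral>\<^sup>+ x. ennreal \<bar>chi \<Omega> (u k) x - chi \<Omega> (u (Suc k)) x\<bar> \<partial>lebesgue_on \<Omega>)"
    if "k \<ge> 1" "p \<ge> 1" for k p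
  proof (rule nn_integral_chi_diff_le)
    obtain j where j: "k = Suc j" using \<open>k \<ge> 1\<close> by (cases k) auto
    show "AE x in lebesgue_on \<Omega>. (u k x = 0) \<noteq> (u (Suc k) x = 0) \<longrightarrow> \<sigma> g (1 / L) \<le> \<bar>u (Suc k) x - u k x\<bar>"
      using step[of j, folded j] step[of k] by eventually_elim (metis \<sigma>_le_jump)
    show "\<sigma> g (1 / L) \<ge> 0" "p \<ge> 0" using \<sigma> \<open>p \<ge> 1\<close> by auto
  qed (fact L2_measurable[OF u])+
  with \<sigma> show ?thesis by blast
qed

end
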